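(* Consider an axially symmetric magnetized star and its surroundings in a steady state, described in an inertial frame with spherical polar coordinates $(r,\theta,\phi)$ (rotation axis $\theta=0$) by ideal magnetohydrodynamics, and consisting of a magnetic rotator flow region and a disk region separated by a shock boundary $\Sigma_{shock}$. Let $Q$ be any point on $\Sigma_{shock}$. Suppose that there is no meridional motion in the disk region, i.e. the disk velocity is $\hat{\mathbf{v}}=\hat v_\phi\,\mathbf e_\phi$, and that the normal component $\hat B_{n,Q}$ of the magnetic field in the disk region at $Q$ is not zero. Let $\hat Q$ be the point of the disk region adjacent to $Q$ on the magnetic field line through $Q$. Then the angular velocity of the disk region at $\hat Q$ (that is, $\hat v_\phi/(r\sin\theta)$ there) is equal to the angular velocity $\omega$ at the point $P_\star$ of the stellar photosphere at which the magnetic field line through $Q$ is anchored. Furthermore, if the system is equatorially symmetric and the magnetic field line through $Q$ is continuous across the disk, then the angular velocity at all points of the disk region along this field line is the same as that at $P_\star$, for time periods over which the disk region remains steady.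
   Context: Vectors are decomposed into meridional and azimuthal parts, $\mathbf v=\mathbf v_m+v_\phi\mathbf e_\phi$, $\mathbf B=\mathbf B_m+B_\phi\mathbf e_\phi$, where $\mathbf e_r,\mathbf e_\theta,\mathbf e_\phi$ are the unit coordinate vectors. All quantities are independent of $\phi$ (axial symmetry) and of time (steady state). In each region the material is a perfectly conducting fluid satisfying $\mathrm{div}(\rho\mathbf v)=0$, $\mathrm{div}\,\mathbf B=0$ and the steady induction equation $\mathrm{curl}(\mathbf v\times\mathbf B)=\mathbf 0$. In the flow region these imply $\mathbf v_m=\chi\mathbf B_m$ for a scalar function $\chi$ (meridional streamlines coincide with meridional field lines) and $\mathbf v=\chi\mathbf B+\omega\,r\sin\theta\,\mathbf e_\phi$, where $\omega$ is constant along each meridional field line; $\omega$ is the angular velocity of that field line, equal to the angular velocity of the star at the photospheric point $P_\star$ where the field line is anchored. Across the shock surface $\Sigma_{shock}$, with unit normal $\mathbf n$ pointing from the flow region into the disk and unit meridional tangent $\mathbf t=\mathbf n\times\mathbf e_\phi$, the jump conditions hold: the normal magnetic field is continuous, $\Delta[B_n]=0$, and the tangential electric field is continuous, $\Delta[(\mathbf v\times\mathbf B)\cdot\mathbf t]=0$, where $\Delta[\cdot]$ denotes the change across the shock and hatted quantities refer to the disk side. *)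

theory Defs
  imports "HOL-Analysis.Analysis" "HOL-Analysis.Cross3"
begin

text \<open>Meridional points are pairs (r, theta) of spherical polar coordinates;
  by axial symmetry nothing depends on phi.  An axisymmetric vector field is
  given by its components with respect to the right-handed orthonormal frame
  (e_r, e_theta, e_phi), stored as a vector of type real^3
  (index 1 = r, 2 = theta, 3 = phi).  Cross and dot products of physical
  vectors are then cross3 and the inner product of the component vectors.\<close>

type_synonym mpoint = "real \<times> real"
type_synonym vfield = "mpoint \<Rightarrow> real^3"

definition merid_domain :: "mpoint set" where
  "merid_domain = {p. 0 < fst p \<and> 0 < snd p \<and> snd p < pi}"

definition cyl_rad :: "mpoint \<Rightarrow> real" where
  "cyl_rad p = fst p * sin (snd p)"

definition e_phi :: "real^3" where
  "e_phi = vector [0, 0, 1]"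

definition d_r :: "(mpoint \<Rightarrow> real) \<Rightarrow> mpoint \<Rightarrow> real" where
  "d_r f p = deriv (\<lambda>x. f (x, snd p)) (fst p)"

definition d_th :: "(mpoint \<Rightarrow> real) \<Rightarrow> mpoint \<Rightarrow> real" where
  "d_th f p = deriv (\<lambda>y. f (fst p, y)) (snd p)"

definition div_sph :: "vfield \<Rightarrow> mpoint \<Rightarrow> real" where
  "div_sph A p =
     (1 / (fst p)\<^sup>2) * d_r (\<lambda>q. (fst q)\<^sup>2 * A q $ 1) p
   + (1 / (fst p * sin (snd p))) * d_th (\<lambda>q. sin (snd q) * A q $ 2) p"

definition curl_sph :: "vfield \<Rightarrow> vfield" where
  "curl_sph A p = vector
     [ (1 / (fst p * sin (snd p))) * d_th (\<lambda>q. sin (snd q) * A q $ 3) p,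
       - (1 / fst p) * d_r (\<lambda>q. fst q * A q $ 3) p,
       (1 / fst p) * (d_r (\<lambda>q. fst q * A q $ 2) p - d_th (\<lambda>q. A q $ 1) p) ]"

text \<open>A (segment of a) meridional field line of B lying in S: a curve
  s \<mapsto> (r(s), theta(s)), s in [a,b], whose physical tangent (r', r theta')
  is parallel to the meridional field (B_r, B_theta).\<close>
definition merid_field_line ::
    "vfield \<Rightarrow> mpoint set \<Rightarrow> (real \<Rightarrow> mpoint) \<Rightarrow> real \<Rightarrow> real \<Rightarrow> bool" where
  "merid_field_line B S c a b \<longleftrightarrow> a \<le> b \<and>
     (\<forall>s\<in>{a..b}. c s \<in> S \<and>
        (\<exists>l. (c has_vector_derivative
               (l * B (c s) $ 1, l * B (c s) $ 2 / fst (c s))) (at s within {a..b})))"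

definition ang_vel :: "vfield \<Rightarrow> mpoint \<Rightarrow> real" where
  "ang_vel v p = v p $ 3 / cyl_rad p"

definition eq_mirror :: "mpoint \<Rightarrow> mpoint" where
  "eq_mirror p = (fst p, pi - snd p)"

definition eq_symmetric ::
    "mpoint set \<Rightarrow> mpoint set \<Rightarrow> mpoint set \<Rightarrow> mpoint set
     \<Rightarrow> (mpoint \<Rightarrow> real) \<Rightarrow> vfield \<Rightarrow> bool" where
  "eq_symmetric F D Shk Sstar omega vh \<longleftrightarrow>
     eq_mirror ` F = F \<and> eq_mirror ` D = D \<and> eq_mirror ` Shk = Shk \<and>
     eq_mirror ` Sstar = Sstar \<and>
     (\<forall>p\<in>closure F. omega (eq_mirror p) = omega p) \<and>
     (\<forall>p\<in>closure D. vh (eq_mirror p) $ 3 = vh p $ 3)"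

end

theory Submission
  imports Defs
begin

text \<open>At the shock point Q the flow velocity is v = chi B + omega r sin(theta) e_phi and the
  disk velocity is purely azimuthal, so on either side the tangential electric field is
  (v \<times> B) \<cdot> (n \<times> e_phi) = - (azimuthal slip velocity) B_n.  Continuity of B_n \<noteq> 0 and of
  the tangential electric field force the disk velocity at Q to be omega(Q) r sin(theta), and
  omega(Q) = omega(P_star) because omega is constant along flow field lines.  Inside the disk,
  where v = Omega r sin(theta) e_phi, the azimuthal component of curl (v \<times> B) equals
  r sin(theta) (Omega div B + B_m \<cdot> grad Omega); the steady induction equation and div B = 0
  give Ferraro's isorotation B_m \<cdot> grad Omega = 0, so Omega is constant along the disk field
  line starting at Q.\<close>

lemma cyl_rad_pos: "p \<in> merid_domain \<Longrightarrow> 0 < cyl_rad p"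
  by (auto simp: merid_domain_def cyl_rad_def intro!: mult_pos_pos sin_gt_zero)

lemma continuous_on_ang_vel:
  assumes "continuous_on S v" "S \<subseteq> merid_domain"
  shows "continuous_on S (ang_vel v)"
proof -
  have "continuous_on S cyl_rad"
    unfolding cyl_rad_def by (intro continuous_intros)
  moreover have "\<forall>p\<in>S. cyl_rad p \<noteq> 0"
    using assms(2) cyl_rad_pos by force
  ultimately show ?thesis
    unfolding ang_vel_def using assms(1)
    by (intro continuous_intros) (auto intro: continuous_on_component)
qed

lemma continuous_eq_on_closure:
  fixes f g :: "'a::topological_space \<Rightarrow> 'b::real_normed_vector"
  assumes "continuous_on (closure S) f" "continuous_on (closure S) g"
    and "\<And>x. x \<in> S \<Longrightarrow> f x = g x" "x \<in> closure S"
  shows "f x = g x"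
  using continuous_constant_on_closure[of S "\<lambda>x. f x - g x" 0 x] assms
  by (simp add: continuous_on_diff)

lemma linear_apply_Pair:
  fixes f :: "real \<times> real \<Rightarrow> real"
  assumes "linear f"
  shows "f (x, y) = x * f (1, 0) + y * f (0, 1)"
proof -
  have "f (x, y) = f (x *\<^sub>R (1, 0) + y *\<^sub>R (0, 1))" by simp
  also have "\<dots> = x *\<^sub>R f (1, 0) + y *\<^sub>R f (0, 1)"
    by (simp only: linear_add[OF assms] linear_scale[OF assms])
  finally show ?thesis by simp
qed

lemma has_derivative_partial_fst:
  fixes f :: "real \<times> real \<Rightarrow> real"
  assumes "(f has_derivative f') (at p)"
  shows "((\<lambda>x. f (x, snd p)) has_real_derivative f' (1, 0)) (at (fst p))"
proof -
  have "((\<lambda>x. (x, snd p)) has_derivative (\<lambda>h. (h, 0))) (at (fst p))"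
    by (auto intro!: derivative_eq_intros)
  from has_derivative_compose[OF this] assms
  have "((\<lambda>x. f (x, snd p)) has_derivative (\<lambda>h. f' (h, 0))) (at (fst p))"
    by simp
  moreover have "h * f' (1, 0) = f' (h, 0)" for h
    using linear_apply_Pair[OF has_derivative_linear[OF assms], of h 0] by simp
  ultimately show ?thesis
    by (rule has_derivative_imp_has_field_derivative)
qed

lemma has_derivative_partial_snd:
  fixes f :: "real \<times> real \<Rightarrow> real"
  assumes "(f has_derivative f') (at p)"
  shows "((\<lambda>y. f (fst p, y)) has_real_derivative f' (0, 1)) (at (snd p))"
proof -
  have "((\<lambda>y. (fst p, y)) has_derivative (\<lambda>h. (0, h))) (at (snd p))"
    by (auto intro!: derivative_eq_intros)
  from has_derivative_compose[OF this] assms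
  have "((\<lambda>y. f (fst p, y)) has_derivative (\<lambda>h. f' (0, h))) (at (snd p))"
    by simp
  moreover have "h * f' (0, 1) = f' (0, h)" for h
    using linear_apply_Pair[OF has_derivative_linear[OF assms], of 0 h] by simp
  ultimately show ?thesis
    by (rule has_derivative_imp_has_field_derivative)
qed

lemma d_r_eqI:
  assumes "open U" "p \<in> U" "\<And>q. q \<in> U \<Longrightarrow> f q = g q"
    and "((\<lambda>x. g (x, snd p)) has_real_derivative D) (at (fst p))"
  shows "d_r f p = D"
proof -
  have "((\<lambda>x. f (x, snd p)) has_real_derivative D) (at (fst p))"
    by (rule has_field_derivative_transform_within_open[OF assms(4)
          open_vimage[OF assms(1), of "\<lambda>x. (x, snd p)"]])
       (auto intro!: continuous_intros simp: assms(2,3))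
  then show ?thesis
    unfolding d_r_def by (rule DERIV_imp_deriv)
qed

lemma d_th_eqI:
  assumes "open U" "p \<in> U" "\<And>q. q \<in> U \<Longrightarrow> f q = g q"
    and "((\<lambda>y. g (fst p, y)) has_real_derivative D) (at (snd p))"
  shows "d_th f p = D"
proof -
  have "((\<lambda>y. f (fst p, y)) has_real_derivative D) (at (snd p))"
    by (rule has_field_derivative_transform_within_open[OF assms(4)
          open_vimage[OF assms(1), of "\<lambda>y. (fst p, y)"]])
       (auto intro!: continuous_intros simp: assms(2,3))
  then show ?thesis
    unfolding d_th_def by (rule DERIV_imp_deriv)
qed

text \<open>In the coordinates (r, theta) the meridional field is (B_r, B_theta / r), so
  W (B_r, B_theta / r) below is B_m \<cdot> grad Omega.\<close>

lemma curl_cross_azimuthal_phi: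
  fixes v B :: vfield
  assumes U: "open U" "U \<subseteq> merid_domain" "p \<in> U"
    and azimuthal: "\<And>q. q \<in> U \<Longrightarrow> v q $ 1 = 0 \<and> v q $ 2 = 0"
    and Omega: "(ang_vel v has_derivative W) (at p)"
    and B1: "((\<lambda>q. B q $ 1) has_derivative B1') (at p)"
    and B2: "((\<lambda>q. B q $ 2) has_derivative B2') (at p)"
  shows "curl_sph (\<lambda>q. cross3 (v q) (B q)) p $ 3
    = cyl_rad p * (ang_vel v p * div_sph B p + W (B p $ 1, B p $ 2 / fst p))"
proof -
  obtain r t where p: "p = (r, t)" by (cases p)
  have "p \<in> merid_domain" using U by blast
  then have r: "0 < r" and sin_t: "0 < sin t"
    using p by (auto simp: merid_domain_def intro: sin_gt_zero)
  have v3: "v q $ 3 = cyl_rad q * ang_vel v q" if "q \<in> U" for q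
    using cyl_rad_pos[of q] that U(2) by (auto simp: ang_vel_def)
  note partials = has_derivative_partial_fst[OF Omega] has_derivative_partial_snd[OF Omega]
    has_derivative_partial_fst[OF B1] has_derivative_partial_snd[OF B2]
  note partials = partials[unfolded p fst_conv snd_conv]
  define \<Omega> B\<^sub>r B\<^sub>\<theta> where "\<Omega> = ang_vel v p" and "B\<^sub>r = B p $ 1" and "B\<^sub>\<theta> = B p $ 2"
  have curl_r: "d_r (\<lambda>q. fst q * cross3 (v q) (B q) $ 2) p
      = 2 * r * sin t * \<Omega> * B\<^sub>r + r\<^sup>2 * sin t * (W (1, 0) * B\<^sub>r + \<Omega> * B1' (1, 0))"
    by (rule d_r_eqI[OF U(1,3), where g = "\<lambda>q. fst q * cyl_rad q * ang_vel v q * B q $ 1"])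
       (auto simp: cross_components v3 azimuthal cyl_rad_def p \<Omega>_def B\<^sub>r_def
          power2_eq_square algebra_simps intro!: derivative_eq_intros partials)
  have curl_\<theta>: "d_th (\<lambda>q. cross3 (v q) (B q) $ 1) p
      = - (r * cos t * \<Omega> * B\<^sub>\<theta> + r * sin t * (W (0, 1) * B\<^sub>\<theta> + \<Omega> * B2' (0, 1)))"
    by (rule d_th_eqI[OF U(1,3), where g = "\<lambda>q. - (cyl_rad q * ang_vel v q * B q $ 2)"])
       (auto simp: cross_components v3 azimuthal cyl_rad_def p \<Omega>_def B\<^sub>\<theta>_def
          algebra_simps intro!: derivative_eq_intros partials)
  have div_r: "d_r (\<lambda>q. (fst q)\<^sup>2 * B q $ 1) p = 2 * r * B\<^sub>r + r\<^sup>2 * B1' (1, 0)"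
    by (rule d_r_eqI[OF U(1,3), where g = "\<lambda>q. (fst q)\<^sup>2 * B q $ 1"])
       (auto simp: p B\<^sub>r_def intro!: derivative_eq_intros partials)
  have div_\<theta>: "d_th (\<lambda>q. sin (snd q) * B q $ 2) p = cos t * B\<^sub>\<theta> + sin t * B2' (0, 1)"
    by (rule d_th_eqI[OF U(1,3), where g = "\<lambda>q. sin (snd q) * B q $ 2"])
       (auto simp: p B\<^sub>\<theta>_def intro!: derivative_eq_intros partials)
  have r_t: "fst p = r" "snd p = t" "cyl_rad p = r * sin t"
    by (simp_all add: p cyl_rad_def)
  have W: "W (B p $ 1, B p $ 2 / fst p) = B\<^sub>r * W (1, 0) + B\<^sub>\<theta> / r * W (0, 1)"
    unfolding B\<^sub>r_def B\<^sub>\<theta>_def r_t by (rule linear_apply_Pair[OF has_derivative_linear[OF Omega]])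
  show ?thesis
    using r sin_t
    unfolding curl_sph_def div_sph_def vector_3 curl_r curl_\<theta> div_r div_\<theta> W
    by (simp add: r_t \<Omega>_def [symmetric] B\<^sub>r_def [symmetric] B\<^sub>\<theta>_def [symmetric]
        field_simps power2_eq_square)
qed

lemma isorotation:
  fixes v B :: vfield
  assumes U: "open U" "U \<subseteq> merid_domain" "p \<in> U"
    and azimuthal: "\<And>q. q \<in> U \<Longrightarrow> v q $ 1 = 0 \<and> v q $ 2 = 0"
    and smooth: "v differentiable (at p)" "B differentiable (at p)"
    and div_free: "div_sph B p = 0"
    and steady_induction: "curl_sph (\<lambda>q. cross3 (v q) (B q)) p = 0"
  obtains W where "(ang_vel v has_derivative W) (at p)" "W (B p $ 1, B p $ 2 / fst p) = 0"
proof -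
  obtain v' where v': "(v has_derivative v') (at p)"
    using smooth(1) by (auto simp: differentiable_def)
  obtain B' where B': "(B has_derivative B') (at p)"
    using smooth(2) by (auto simp: differentiable_def)
  have "(cyl_rad has_derivative (\<lambda>h. fst h * sin (snd p) + fst p * (snd h * cos (snd p)))) (at p)"
    unfolding cyl_rad_def by (auto intro!: derivative_eq_intros)
  then have "ang_vel v differentiable (at p)"
    unfolding ang_vel_def using cyl_rad_pos[of p] U
    by (intro differentiable_divide
        differentiableI[OF bounded_linear.has_derivative[OF bounded_linear_vec_nth v']])
       (auto intro: differentiableI)
  then obtain W where W: "(ang_vel v has_derivative W) (at p)"
    by (auto simp: differentiable_def)
  have "cyl_rad p * W (B p $ 1, B p $ 2 / fst p) = 0"
    using curl_cross_azimuthal_phi[OF U azimuthal W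
        bounded_linear.has_derivative[OF bounded_linear_vec_nth B']
        bounded_linear.has_derivative[OF bounded_linear_vec_nth B']]
      div_free steady_induction by simp
  with cyl_rad_pos[of p] U show thesis
    by (intro that[OF W]) auto
qed

lemma merid_field_line_continuous_on:
  assumes "merid_field_line B S c a b"
  shows "continuous_on {a..b} c"
  using assms unfolding merid_field_line_def continuous_on_eq_continuous_within
  by (blast intro: has_vector_derivative_continuous)

lemma constant_along_merid_field_line:
  fixes f :: "mpoint \<Rightarrow> real"
  assumes line: "merid_field_line B S c a b"
    and cont: "continuous_on (c ` {a..b}) f"
    and annihilates: "\<And>s. a < s \<Longrightarrow> s < b \<Longrightarrow>
      \<exists>f'. (f has_derivative f') (at (c s)) \<and> f' (B (c s) $ 1, B (c s) $ 2 / fst (c s)) = 0"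
    and s: "s \<in> {a..b}"
  shows "f (c s) = f (c a)"
proof (cases "s = a")
  case False
  with s have "a < s" by simp
  then show ?thesis
  proof (rule DERIV_isconst_end)
    have "continuous_on {a..b} (\<lambda>s. f (c s))"
      by (rule continuous_on_compose2[OF cont merid_field_line_continuous_on[OF line]]) simp
    then show "continuous_on {a..s} (\<lambda>s. f (c s))"
      by (rule continuous_on_subset) (use s in simp)
  next
    fix x assume x: "a < x" "x < s"
    with s have "x \<in> {a..b}" "a < x" "x < b" by auto
    define u where "u = (B (c x) $ 1, B (c x) $ 2 / fst (c x))"
    obtain l where
      "(c has_vector_derivative (l * B (c x) $ 1, l * B (c x) $ 2 / fst (c x))) (at x within {a..b})"
      using line \<open>x \<in> {a..b}\<close> unfolding merid_field_line_def by blast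
    moreover have "at x within {a..b} = at x"
      by (rule at_within_interior) (use x s in simp)
    ultimately have "(c has_derivative (\<lambda>h. h *\<^sub>R l *\<^sub>R u)) (at x)"
      by (simp add: u_def has_vector_derivative_def)
    moreover obtain f' where f': "(f has_derivative f') (at (c x))" and "f' u = 0"
      using annihilates[OF \<open>a < x\<close> \<open>x < b\<close>] unfolding u_def by blast
    ultimately have
      "((\<lambda>s. f (c s)) has_derivative (\<lambda>h. f' (h *\<^sub>R l *\<^sub>R u))) (at x)"
      using has_derivative_compose by blast
    moreover have "h * 0 = f' (h *\<^sub>R l *\<^sub>R u)" for h
      using \<open>f' u = 0\<close> by (simp add: linear_scale[OF has_derivative_linear[OF f']])
    ultimately show "((\<lambda>s. f (c s)) has_real_derivative 0) (at x)"
      by (rule has_derivative_imp_has_field_derivative)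
  qed
qed simp

lemma ang_vel_constant_along_disk_field_line:
  fixes v B :: vfield
  assumes D: "open D" "D \<subseteq> merid_domain"
    and smooth: "\<forall>p\<in>D. B differentiable (at p) \<and> v differentiable (at p)"
      "continuous_on (closure D) v"
    and div_free: "\<forall>p\<in>D. div_sph B p = 0"
    and steady_induction: "\<forall>p\<in>D. curl_sph (\<lambda>q. cross3 (v q) (B q)) p = 0"
    and azimuthal: "\<forall>p\<in>D. v p $ 1 = 0 \<and> v p $ 2 = 0"
    and line: "merid_field_line B (closure D) c a b" "\<forall>s\<in>{a<..<b}. c s \<in> D"
    and ends: "c a \<in> merid_domain" "c b \<in> merid_domain"
    and s: "s \<in> {a..b}"
  shows "ang_vel v (c s) = ang_vel v (c a)"
proof (rule constant_along_merid_field_line[OF line(1) _ _ s])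
  have "c ` {a..b} \<subseteq> closure D \<inter> merid_domain"
  proof
    fix q assume "q \<in> c ` {a..b}"
    then obtain x where x: "x \<in> {a..b}" "q = c x" by blast
    then have "x = a \<or> x = b \<or> x \<in> {a<..<b}" by auto
    then have "q \<in> merid_domain"
      using x ends line(2) D(2) by auto
    moreover have "q \<in> closure D"
      using line(1) x unfolding merid_field_line_def by blast
    ultimately show "q \<in> closure D \<inter> merid_domain" by blast
  qed
  then show "continuous_on (c ` {a..b}) (ang_vel v)"
    using continuous_on_ang_vel[OF continuous_on_subset[OF smooth(2)]] by blast
next
  fix x assume "a < x" "x < b"
  then have "c x \<in> D" using line(2) by simp
  obtain W where "(ang_vel v has_derivative W) (at (c x))"
    and "W (B (c x) $ 1, B (c x) $ 2 / fst (c x)) = 0"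
    by (rule isorotation[OF D(1,2) \<open>c x \<in> D\<close>])
       (use \<open>c x \<in> D\<close> smooth(1) div_free steady_induction azimuthal in auto)
  then show "\<exists>W. (ang_vel v has_derivative W) (at (c x)) \<and>
      W (B (c x) $ 1, B (c x) $ 2 / fst (c x)) = 0"
    by blast
qed

lemma tangential_electric_field:
  fixes v B n :: "real^3"
  assumes "n $ 3 = 0" "v $ 1 = chi * B $ 1" "v $ 2 = chi * B $ 2"
  shows "cross3 v B \<bullet> cross3 n e_phi = (chi * B $ 3 - v $ 3) * (B \<bullet> n)"
  using assms
  by (simp add: cross_components inner_vec_def sum_3 e_phi_def algebra_simps)

lemma azimuthal_velocity_jump:
  fixes v B vh Bh n :: "real^3"
  assumes n: "n $ 3 = 0"
    and flow: "v = chi *\<^sub>R B + w *\<^sub>R e_phi"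
    and disk: "vh $ 1 = 0" "vh $ 2 = 0"
    and jump_Bn: "B \<bullet> n = Bh \<bullet> n" "Bh \<bullet> n \<noteq> 0"
    and jump_E: "cross3 v B \<bullet> cross3 n e_phi = cross3 vh Bh \<bullet> cross3 n e_phi"
  shows "vh $ 3 = w"
proof -
  have "cross3 v B \<bullet> cross3 n e_phi = - w * (B \<bullet> n)"
    using tangential_electric_field[of n v chi B] n by (simp add: flow e_phi_def)
  moreover have "cross3 vh Bh \<bullet> cross3 n e_phi = - vh $ 3 * (Bh \<bullet> n)"
    using tangential_electric_field[of n vh 0 Bh] n disk by simp
  ultimately show ?thesis
    using jump_Bn jump_E by simp
qed

theorem theorem1:
  fixes F D Shk Sstar :: "mpoint set"
    and B v Bh vh :: vfield
    and chi omega :: "mpoint \<Rightarrow> real"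
    and Q Pstar :: mpoint
    and n :: "real^3"
    and c0 :: "real \<Rightarrow> mpoint" and a0 b0 :: real
  assumes regions: "open F" "open D" "F \<inter> D = {}"
      "F \<subseteq> merid_domain" "D \<subseteq> merid_domain" "Shk \<subseteq> merid_domain"
      "Shk \<subseteq> closure F \<inter> closure D" "Sstar \<subseteq> closure F"
    and flow_cont: "continuous_on (closure F) B" "continuous_on (closure F) v"
      "continuous_on (closure F) chi" "continuous_on (closure F) omega"
    and flow_vel: "\<forall>p\<in>F. v p = chi p *\<^sub>R B p + (omega p * cyl_rad p) *\<^sub>R e_phi"
    and iso_flow: "\<forall>c a b. merid_field_line B (closure F) c a b \<longrightarrow> omega (c b) = omega (c a)"
    and disk_smooth: "\<forall>p\<in>D. Bh differentiable (at p) \<and> vh differentiable (at p)"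
      "continuous_on (closure D) Bh" "continuous_on (closure D) vh"
    and disk_divB: "\<forall>p\<in>D. div_sph Bh p = 0"
    and disk_induction: "\<forall>p\<in>D. curl_sph (\<lambda>q. cross3 (vh q) (Bh q)) p = 0"
    and no_merid: "\<forall>p\<in>D. vh p $ 1 = 0 \<and> vh p $ 2 = 0"
    and Q: "Q \<in> Shk"
    and normal: "n $ 3 = 0" "norm n = 1"
      "\<exists>\<sigma> d1 d2. \<sigma> 0 = Q \<and> \<sigma> ` {-1<..<1} \<subseteq> Shk \<and>
          (\<sigma> has_vector_derivative (d1, d2)) (at 0) \<and> (d1, d2) \<noteq> (0, 0) \<and>
          n $ 1 * d1 + n $ 2 * (fst Q * d2) = 0"
      "\<forall>\<^sub>F h in at_right 0. (fst Q + h * n $ 1, snd Q + h * n $ 2 / fst Q) \<in> D"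
    and jump_Bn: "B Q \<bullet> n = Bh Q \<bullet> n"
    and jump_E: "cross3 (v Q) (B Q) \<bullet> cross3 n e_phi = cross3 (vh Q) (Bh Q) \<bullet> cross3 n e_phi"
    and Bn_nonzero: "Bh Q \<bullet> n \<noteq> 0"
    and anchor: "Pstar \<in> Sstar" "merid_field_line B (closure F) c0 a0 b0"
      "c0 a0 = Pstar" "c0 b0 = Q"
  shows "ang_vel vh Q = omega Pstar \<and>
    (\<forall>c a b. eq_symmetric F D Shk Sstar omega vh \<and>
        merid_field_line Bh (closure D) c a b \<and> c a = Q \<and>
        (\<forall>s\<in>{a<..<b}. c s \<in> D) \<and> c b \<in> Shk
      \<longrightarrow> (\<forall>s\<in>{a..b}. ang_vel vh (c s) = omega Pstar))"
proof -
  have Q_cl: "Q \<in> closure F" "Q \<in> closure D" and Q_dom: "Q \<in> merid_domain"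
    using Q regions by auto
  have "continuous_on (closure F) (\<lambda>q. chi q *\<^sub>R B q + (omega q * cyl_rad q) *\<^sub>R e_phi)"
    using flow_cont unfolding cyl_rad_def by (intro continuous_intros)
  then have flow_Q: "v Q = chi Q *\<^sub>R B Q + (omega Q * cyl_rad Q) *\<^sub>R e_phi"
    by (rule continuous_eq_on_closure[OF flow_cont(2) _ _ Q_cl(1)]) (simp add: flow_vel)
  have disk_Q: "vh Q $ 1 = 0" "vh Q $ 2 = 0"
    by (rule continuous_constant_on_closure[OF continuous_on_component[OF disk_smooth(3)]];
        simp add: no_merid Q_cl)+
  have "vh Q $ 3 = omega Q * cyl_rad Q"
    by (rule azimuthal_velocity_jump[OF normal(1) flow_Q disk_Q jump_Bn Bn_nonzero jump_E])
  moreover have "omega Q = omega Pstar"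
    using iso_flow[rule_format, OF anchor(2)] anchor(3,4) by simp
  ultimately have shock: "ang_vel vh Q = omega Pstar"
    using cyl_rad_pos[OF Q_dom] by (simp add: ang_vel_def)
  have "ang_vel vh (c s) = omega Pstar"
    if "merid_field_line Bh (closure D) c a b" "c a = Q" "\<forall>s\<in>{a<..<b}. c s \<in> D" "c b \<in> Shk"
      and "s \<in> {a..b}" for c a b s
    using ang_vel_constant_along_disk_field_line[OF regions(2,5) disk_smooth(1,3) disk_divB
        disk_induction no_merid that(1,3) _ subsetD[OF regions(6) that(4)] that(5)]
      that(2) Q_dom shock
    by simp
  with shock show ?thesis by blast
qed

end
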